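(* Let $p$ be a prime and let $E$ be an elementary abelian $p$-group of rank at least $2$. Then for every $z\in E$, $$\sum_{\substack{Z\le E\\ z\in Z}}\frac{\mu(\mathbf{1},Z)}{|Z|}=0,$$ where the sum runs over subgroups $Z$ of $E$ containing $z$.
   Context: $\mu$ denotes the Möbius function of the poset of subgroups of $E$ ordered by inclusion, and $\mathbf{1}$ is the trivial subgroup. *)

theory Defs
  imports "HOL-Algebra.Algebra"
begin

function subgroup_mobius :: "('a, 'b) monoid_scheme \<Rightarrow> 'a set \<Rightarrow> 'a set \<Rightarrow> int" where
  "subgroup_mobius G H K =
     (if finite K \<and> subgroup H G \<and> subgroup K G \<and> H \<subseteq> K then
        (if H = K then 1
         else - (\<Sum>L \<in> {L. subgroup L G \<and> H \<subseteq> L \<and> L \<subset> K}. subgroup_mobius G H L))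
      else 0)"
  by pat_completeness auto
termination
  by (relation "measure (\<lambda>(G, H, K). card K)") (auto intro: psubset_card_mono)

definition elementary_abelian :: "('a, 'b) monoid_scheme \<Rightarrow> nat \<Rightarrow> nat \<Rightarrow> bool" where
  "elementary_abelian G p r \<longleftrightarrow>
     comm_group G \<and> finite (carrier G) \<and> (\<forall>x \<in> carrier G. x [^]\<^bsub>G\<^esub> p = \<one>\<^bsub>G\<^esub>)
     \<and> card (carrier G) = p ^ r"

end

theory Submission
  imports Defs
begin

text \<open>For \<open>z\<close> of prime order \<open>p\<close> in a finite abelian group, \<open>H \<mapsto> H\<langle>z\<rangle>\<close> maps the
subgroups avoiding \<open>z\<close> onto those containing \<open>z\<close>, multiplying orders by \<open>p\<close>, and by
Weisner's theorem the Moebius values \<open>\<mu>(1,H)\<close> over each fibre together with \<open>\<mu>(1,K)\<close> sum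
to zero. Hence \<open>(1 - p) S(z) = T\<close>, where \<open>S(z)\<close> is the sum of \<open>\<mu>(1,Z)/|Z|\<close> over the
subgroups containing \<open>z\<close> and \<open>T\<close> the sum over all subgroups. Summing \<open>S\<close> over all
elements counts each \<open>Z\<close> exactly \<open>|Z|\<close> times, so it equals \<open>\<Sum>\<^sub>Z \<mu>(1,Z) = 0\<close>; in an
elementary abelian group this reads \<open>T + (|E| - 1) T / (1 - p) = 0\<close>, which forces \<open>T = 0\<close>
as soon as \<open>|E| \<noteq> p\<close>, and then \<open>S(z) = 0\<close>.\<close>

declare subgroup_mobius.simps [simp del]

definition subgroup_mobius_weight :: "('a, 'b) monoid_scheme \<Rightarrow> 'a set \<Rightarrow> real" where
  "subgroup_mobius_weight G K = real_of_int (subgroup_mobius G {\<one>\<^bsub>G\<^esub>} K) / real (card K)"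

lemma (in group) finite_subgroups:
  assumes "finite (carrier G)"
  shows "finite {H. subgroup H G \<and> P H}"
  using assms subgroup.subset by (auto intro: finite_subset[of _ "Pow (carrier G)"])

lemma (in group) subgroup_mobius_sum_eq_0:
  assumes K: "subgroup K G" "finite K" "K \<noteq> {\<one>}"
  shows "(\<Sum>L\<in>{L. subgroup L G \<and> L \<subseteq> K}. subgroup_mobius G {\<one>} L) = 0"
proof -
  let ?below = "{L. subgroup L G \<and> {\<one>} \<subseteq> L \<and> L \<subset> K}"
  have one_K: "{\<one>} \<subseteq> K" using subgroup.one_closed[OF K(1)] by simp
  have "subgroup_mobius G {\<one>} K = - (\<Sum>L\<in>?below. subgroup_mobius G {\<one>} L)"
    using K one_K triv_subgroup by (subst subgroup_mobius.simps) auto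
  moreover have "{L. subgroup L G \<and> L \<subseteq> K} = insert K ?below"
    using K(1) subgroup.one_closed by fastforce
  moreover have "finite ?below"
    using K(2) by (auto intro: finite_subset[of _ "Pow K"])
  ultimately show ?thesis by simp
qed

lemma (in group) card_set_mult_of_trivial_inter:
  assumes H: "subgroup H G" and K: "subgroup K G" and HK: "H \<inter> K = {\<one>}"
  shows "card (H <#> K) = card H * card K"
proof -
  have "H <#> K = (\<lambda>(h, k). h \<otimes> k) ` (H \<times> K)"
    by (auto simp: set_mult_def)
  moreover have "inj_on (\<lambda>(h, k). h \<otimes> k) (H \<times> K)"
  proof (rule inj_onI, clarify)
    fix h k h' k' assume hk: "h \<in> H" "k \<in> K" "h' \<in> H" "k' \<in> K" and eq: "h \<otimes> k = h' \<otimes> k'"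
    have carr: "h \<in> carrier G" "k \<in> carrier G" "h' \<in> carrier G" "k' \<in> carrier G"
      using hk H K subgroup.mem_carrier by metis+
    have "h = h' \<otimes> k' \<otimes> inv k" using carr eq by (simp add: inv_solve_right)
    then have "inv h' \<otimes> h = k' \<otimes> inv k" using carr by (simp add: inv_solve_left' m_assoc)
    moreover have "inv h' \<otimes> h \<in> H" "k' \<otimes> inv k \<in> K"
      using hk H K by (auto intro: subgroup.m_closed subgroup.m_inv_closed)
    ultimately have "inv h' \<otimes> h = \<one>" "k' \<otimes> inv k = \<one>" using HK by auto
    then show "h = h' \<and> k = k'"
      using carr by (metis inv_equality inv_inv inv_closed)
  qed
  ultimately show ?thesis by (simp add: card_image card_cartesian_product)
qed

lemma (in group) subgroup_inter_generate_prime_ord: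
  assumes fin: "finite (carrier G)" and H: "subgroup H G"
    and z: "z \<in> carrier G" "Factorial_Ring.prime (ord z)" "z \<notin> H"
  shows "H \<inter> generate G {z} = {\<one>}"
proof (rule ccontr)
  assume "H \<inter> generate G {z} \<noteq> {\<one>}"
  moreover have "\<one> \<in> H \<inter> generate G {z}"
    using H z(1) generate.one subgroup.one_closed by blast
  ultimately obtain w where w: "w \<in> H" "w \<in> generate G {z}" "w \<noteq> \<one>" by blast
  obtain k :: nat where k: "w = z [^] k"
    using w(2) generate_pow_on_finite_carrier[OF fin z(1)] by blast
  have w_carr: "w \<in> carrier G" using k z(1) by simp
  have "w [^] ord z = \<one>"
    using k z(1) by (metis nat_pow_one nat_pow_pow mult.commute pow_ord_eq_1)
  then have "ord w dvd ord z" using pow_eq_id[OF w_carr] by simp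
  moreover have "ord w \<noteq> 1" using ord_eq_1[OF w_carr] w(3) by simp
  ultimately have "ord w = ord z" using z(2) by (auto simp: prime_nat_iff)
  then have "card (generate G {w}) = card (generate G {z})"
    using generate_pow_card w_carr z(1) by metis
  moreover have "generate G {w} \<subseteq> generate G {z}"
    using w(2) z(1) by (intro generate_subgroup_incl generate_is_subgroup) auto
  ultimately have "generate G {w} = generate G {z}"
    using fin z(1) by (intro card_subset_eq finite_subset[OF _ fin] generate_incl) auto
  moreover have "generate G {w} \<subseteq> H" using w(1) H by (intro generate_subgroup_incl) auto
  ultimately show False using z(3) generate.incl[of z "{z}" G] by blast
qed

lemma (in group) subgroup_subset_set_mult:
  assumes "subgroup H G" "subgroup N G"
  shows "H \<subseteq> H <#> N" "N \<subseteq> H <#> N"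
proof -
  have "H <#> {\<one>} \<subseteq> H <#> N" "{\<one>} <#> N \<subseteq> H <#> N"
    using assms subgroup.one_closed mono_set_mult[of H H "{\<one>}" N G] mono_set_mult[of "{\<one>}" H N N G]
    by blast+
  moreover have "H <#> {\<one>} = H" "{\<one>} <#> N = N"
    using assms subgroup.mem_carrier by (force simp: set_mult_def)+
  ultimately show "H \<subseteq> H <#> N" "N \<subseteq> H <#> N" by simp_all
qed

lemma (in group) set_mult_subset_subgroup:
  assumes "subgroup K G" "H \<subseteq> K" "N \<subseteq> K"
  shows "H <#> N \<subseteq> K"
  using mono_set_mult[OF assms(2,3), of G] subgroup_mult_id[OF assms(1)] by simp

lemma (in group) set_mult_absorb_subgroup:
  assumes "subgroup H G" "subgroup N G" "N \<subseteq> H"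
  shows "H <#> N = H"
  using set_mult_subset_subgroup[OF assms(1) order_refl assms(3)]
    subgroup_subset_set_mult(1)[OF assms(1,2)]
  by (rule antisym)

text \<open>Weisner's theorem for the join with \<open>N\<close>: grouping the subgroups of \<open>K\<close> by their join
with \<open>N\<close>, the fibres over proper \<open>K' \<supseteq> N\<close> vanish by induction, so the fibre over \<open>K\<close> carries
the whole sum \<open>\<Sum>\<^bsub>H \<le> K\<^esub> \<mu>(1,H) = 0\<close>.\<close>

lemma (in comm_group) weisner_subgroup_mobius:
  assumes N: "subgroup N G" "N \<noteq> {\<one>}" and K: "subgroup K G" "finite K" "N \<subseteq> K"
  shows "(\<Sum>H\<in>{H. subgroup H G \<and> H <#> N = K}. subgroup_mobius G {\<one>} H) = 0"
  using K
proof (induction "card K" arbitrary: K rule: less_induct)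
  case less
  define W where "W K' = (\<Sum>H\<in>{H. subgroup H G \<and> H <#> N = K'}. subgroup_mobius G {\<one>} H)"
    for K'
  let ?between = "{K'. subgroup K' G \<and> N \<subseteq> K' \<and> K' \<subseteq> K}"
  let ?below = "{H. subgroup H G \<and> H \<subseteq> K}"
  note fin_K = less.prems(2)
  have fin_between: "finite ?between" using fin_K by (auto intro: finite_subset[of _ "Pow K"])
  have fin_below: "finite ?below" using fin_K by (auto intro: finite_subset[of _ "Pow K"])
  have image_below: "(\<lambda>H. H <#> N) ` ?below \<subseteq> ?between"
  proof (rule image_subsetI)
    fix H assume "H \<in> ?below"
    then have H: "subgroup H G" "H \<subseteq> K" by simp_all
    have "subgroup (H <#> N) G" using H(1) N(1) by (rule mult_subgroups)
    moreover have "N \<subseteq> H <#> N" using H(1) N(1) by (rule subgroup_subset_set_mult(2))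
    moreover have "H <#> N \<subseteq> K" using less.prems(1) H(2) less.prems(3) by (rule set_mult_subset_subgroup)
    ultimately show "H <#> N \<in> ?between" by simp
  qed
  have "(\<Sum>K'\<in>?between. W K')
      = (\<Sum>K'\<in>?between. \<Sum>H\<in>{H \<in> ?below. H <#> N = K'}. subgroup_mobius G {\<one>} H)"
  proof (rule sum.cong[OF refl])
    fix K' assume "K' \<in> ?between"
    then have "{H \<in> ?below. H <#> N = K'} = {H. subgroup H G \<and> H <#> N = K'}"
      using N(1) subgroup_subset_set_mult(1) by blast
    then show "W K' = (\<Sum>H\<in>{H \<in> ?below. H <#> N = K'}. subgroup_mobius G {\<one>} H)"
      by (simp add: W_def)
  qed
  also have "\<dots> = (\<Sum>H\<in>?below. subgroup_mobius G {\<one>} H)"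
    by (rule sum.group[OF fin_below fin_between image_below])
  also have "\<dots> = 0"
  proof (rule subgroup_mobius_sum_eq_0[OF less.prems(1) fin_K])
    show "K \<noteq> {\<one>}" using N less.prems(3) subgroup.one_closed by blast
  qed
  finally have sum_between: "(\<Sum>K'\<in>?between. W K') = 0" .
  have "(\<Sum>K'\<in>?between - {K}. W K') = 0"
  proof (rule sum.neutral, rule ballI)
    fix K' assume K': "K' \<in> ?between - {K}"
    then have "card K' < card K" "finite K'" using fin_K by (auto intro: psubset_card_mono finite_subset)
    then show "W K' = 0" unfolding W_def using less.hyps K' by blast
  qed
  moreover have "K \<in> ?between" using less.prems by blast
  ultimately show ?case
    using sum_between sum.remove[OF fin_between, of K W] by (simp add: W_def)
qed

lemma (in group) card_set_mult_generate_prime_ord: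
  assumes fin: "finite (carrier G)" and H: "subgroup H G"
    and z: "z \<in> carrier G" "Factorial_Ring.prime (ord z)" "z \<notin> H"
  shows "card (H <#> generate G {z}) = ord z * card H"
  using card_set_mult_of_trivial_inter[OF H generate_is_subgroup
      subgroup_inter_generate_prime_ord[OF fin H z]]
    generate_pow_card[OF z(1)] z(1)
  by simp

lemma (in comm_group) mobius_weight_sum_avoiding:
  assumes fin: "finite (carrier G)" and z: "z \<in> carrier G" "Factorial_Ring.prime (ord z)"
  shows "(\<Sum>H\<in>{H. subgroup H G \<and> z \<notin> H}. subgroup_mobius_weight G H)
       = - real (ord z) * (\<Sum>K\<in>{K. subgroup K G \<and> z \<in> K}. subgroup_mobius_weight G K)"
proof -
  define N where "N = generate G {z}"
  let ?avoiding = "{H. subgroup H G \<and> z \<notin> H}"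
  let ?through = "{K. subgroup K G \<and> z \<in> K}"
  have N: "subgroup N G" "z \<in> N" using z(1) by (simp_all add: N_def generate_is_subgroup generate.incl)
  have N_below: "N \<subseteq> K" if "subgroup K G" "z \<in> K" for K
    using that z(1) by (simp add: N_def generate_subgroup_incl)
  have "N \<noteq> {\<one>}" using N(2) z(2) ord_eq_1[OF z(1)] by auto
  have "(\<lambda>H. H <#> N) ` ?avoiding \<subseteq> ?through"
    using N mult_subgroups subgroup_subset_set_mult(2) by blast
  then have "(\<Sum>H\<in>?avoiding. subgroup_mobius_weight G H)
      = (\<Sum>K\<in>?through. \<Sum>H\<in>{H \<in> ?avoiding. H <#> N = K}. subgroup_mobius_weight G H)"
    by (rule sum.group[OF finite_subgroups[OF fin] finite_subgroups[OF fin], symmetric])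
  also have "\<dots> = (\<Sum>K\<in>?through. - real (ord z) * subgroup_mobius_weight G K)"
  proof (rule sum.cong[OF refl])
    fix K assume "K \<in> ?through"
    then have K: "subgroup K G" "z \<in> K" by simp_all
    let ?fibre = "{H \<in> ?avoiding. H <#> N = K}"
    have card_K: "card K = ord z * card H" if "H \<in> ?fibre" for H
      using that card_set_mult_generate_prime_ord[OF fin _ z] by (auto simp: N_def)
    have fibre_insert: "{H. subgroup H G \<and> H <#> N = K} = insert K ?fibre"
      using K N(1) N_below set_mult_absorb_subgroup by fastforce
    have fin_fibre: "finite ?fibre"
      by (rule finite_subset[OF _ finite_subgroups[OF fin, of "\<lambda>_. True"]]) auto
    have "(\<Sum>H\<in>insert K ?fibre. subgroup_mobius G {\<one>} H) = 0"
      unfolding fibre_insert[symmetric]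
      using weisner_subgroup_mobius[OF N(1) \<open>N \<noteq> {\<one>}\<close> K(1) _ N_below[OF K]] fin
        subgroup.subset[OF K(1)] finite_subset
      by blast
    then have fibre_sum: "(\<Sum>H\<in>?fibre. subgroup_mobius G {\<one>} H) = - subgroup_mobius G {\<one>} K"
      using K fin_fibre by (subst (asm) sum.insert) auto
    have "(\<Sum>H\<in>?fibre. subgroup_mobius_weight G H)
        = (\<Sum>H\<in>?fibre. real (ord z) / real (card K) * real_of_int (subgroup_mobius G {\<one>} H))"
      using card_K prime_gt_0_nat[OF z(2)]
      by (intro sum.cong refl) (simp add: subgroup_mobius_weight_def)
    also have "\<dots> = real (ord z) / real (card K)
        * real_of_int (\<Sum>H\<in>?fibre. subgroup_mobius G {\<one>} H)"
      by (simp only: sum_distrib_left of_int_sum)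
    also have "\<dots> = - real (ord z) * subgroup_mobius_weight G K"
      using fibre_sum by (simp add: subgroup_mobius_weight_def)
    finally show "(\<Sum>H\<in>?fibre. subgroup_mobius_weight G H) = - real (ord z) * subgroup_mobius_weight G K" .
  qed
  also have "\<dots> = - real (ord z) * (\<Sum>K\<in>?through. subgroup_mobius_weight G K)"
    by (simp add: sum_distrib_left)
  finally show ?thesis .
qed

lemma (in comm_group) mobius_weight_sum_through:
  assumes fin: "finite (carrier G)" and z: "z \<in> carrier G" "Factorial_Ring.prime (ord z)"
  shows "(1 - real (ord z)) * (\<Sum>K\<in>{K. subgroup K G \<and> z \<in> K}. subgroup_mobius_weight G K)
       = (\<Sum>K\<in>{K. subgroup K G}. subgroup_mobius_weight G K)"
proof -
  let ?avoiding = "{H. subgroup H G \<and> z \<notin> H}"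
  let ?through = "{K. subgroup K G \<and> z \<in> K}"
  have split: "{K. subgroup K G} = ?through \<union> ?avoiding" by blast
  have "(\<Sum>K\<in>{K. subgroup K G}. subgroup_mobius_weight G K)
      = (\<Sum>K\<in>?through. subgroup_mobius_weight G K) + (\<Sum>H\<in>?avoiding. subgroup_mobius_weight G H)"
    unfolding split
    by (rule sum.union_disjoint[OF finite_subgroups[OF fin] finite_subgroups[OF fin]]) blast
  then show ?thesis
    using mobius_weight_sum_avoiding[OF fin z] by (simp add: algebra_simps)
qed

lemma (in group) mobius_weight_sum_over_elements:
  assumes fin: "finite (carrier G)" and nontrivial: "carrier G \<noteq> {\<one>}"
  shows "(\<Sum>w\<in>carrier G. \<Sum>K\<in>{K. subgroup K G \<and> w \<in> K}. subgroup_mobius_weight G K) = 0"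
proof -
  have fin_subgroups: "finite {K. subgroup K G}"
    using finite_subgroups[OF fin, of "\<lambda>_. True"] by simp
  have "(\<Sum>w\<in>carrier G. \<Sum>K\<in>{K. subgroup K G \<and> w \<in> K}. subgroup_mobius_weight G K)
      = (\<Sum>K\<in>{K. subgroup K G}. \<Sum>w\<in>{w \<in> carrier G. w \<in> K}. subgroup_mobius_weight G K)"
    using sum.swap_restrict[OF fin fin_subgroups, of "\<lambda>_. subgroup_mobius_weight G" "\<lambda>w K. w \<in> K"]
    by (simp only: mem_Collect_eq)
  also have "\<dots> = (\<Sum>K\<in>{K. subgroup K G}. real_of_int (subgroup_mobius G {\<one>} K))"
  proof (rule sum.cong[OF refl])
    fix K assume "K \<in> {K. subgroup K G}"
    then have K: "subgroup K G" by simp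
    have "{w \<in> carrier G. w \<in> K} = K" using subgroup.subset[OF K] by blast
    moreover have "card K > 0"
      using subgroup.subset[OF K] subgroup.one_closed[OF K] fin
      by (auto simp: card_gt_0_iff finite_subset)
    ultimately show "(\<Sum>w\<in>{w \<in> carrier G. w \<in> K}. subgroup_mobius_weight G K)
        = real_of_int (subgroup_mobius G {\<one>} K)"
      by (simp add: subgroup_mobius_weight_def)
  qed
  also have "{K. subgroup K G} = {K. subgroup K G \<and> K \<subseteq> carrier G}"
    using subgroup.subset by blast
  also have "(\<Sum>K\<in>\<dots>. real_of_int (subgroup_mobius G {\<one>} K)) = 0"
    using subgroup_mobius_sum_eq_0[OF subgroup_self fin nontrivial] by (simp flip: of_int_sum)
  finally show ?thesis .
qed

lemma (in group) ord_eq_prime_exponent: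
  assumes "Factorial_Ring.prime p" "w \<in> carrier G" "w [^] p = \<one>" "w \<noteq> \<one>"
  shows "ord w = p"
proof -
  have "ord w dvd p" using assms(2,3) pow_eq_id by blast
  moreover have "ord w \<noteq> 1" using assms(2,4) ord_eq_1 by blast
  ultimately show ?thesis using assms(1) by (auto simp: prime_nat_iff)
qed

lemma (in comm_group) mobius_weight_sum_through_eq_0:
  assumes fin: "finite (carrier G)" and p: "Factorial_Ring.prime p"
    and exponent: "\<forall>x\<in>carrier G. x [^] p = \<one>" and order: "p < card (carrier G)"
    and z: "z \<in> carrier G"
  shows "(\<Sum>K\<in>{K. subgroup K G \<and> z \<in> K}. subgroup_mobius_weight G K) = 0"
proof -
  define S where "S w = (\<Sum>K\<in>{K. subgroup K G \<and> w \<in> K}. subgroup_mobius_weight G K)" for w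
  define T where "T = (\<Sum>K\<in>{K. subgroup K G}. subgroup_mobius_weight G K)"
  have S_one: "S \<one> = T"
    unfolding S_def T_def using subgroup.one_closed by metis
  have S_other: "(1 - real p) * S w = T" if "w \<in> carrier G - {\<one>}" for w
    using that mobius_weight_sum_through[OF fin, of w] ord_eq_prime_exponent[OF p, of w] exponent p
    by (auto simp: S_def T_def)
  have "carrier G \<noteq> {\<one>}" using order prime_gt_1_nat[OF p] by auto
  then have "0 = (1 - real p) * (\<Sum>w\<in>carrier G. S w)"
    using mobius_weight_sum_over_elements[OF fin] by (simp add: S_def)
  also have "\<dots> = (1 - real p) * S \<one> + (\<Sum>w\<in>carrier G - {\<one>}. (1 - real p) * S w)"
    by (simp add: sum.remove[OF fin one_closed] distrib_left sum_distrib_left)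
  also have "\<dots> = (1 - real p) * T + real (card (carrier G) - 1) * T"
    using S_one S_other fin by (simp add: card_Diff_singleton)
  also have "\<dots> = (real (card (carrier G)) - real p) * T"
    using order by (simp add: of_nat_diff algebra_simps)
  finally have "T = 0" using order by simp
  moreover have "1 - real p \<noteq> 0" using prime_gt_1_nat[OF p] by simp
  ultimately have "S z = 0" using S_one S_other z by (cases "z = \<one>") auto
  then show ?thesis by (simp add: S_def)
qed

theorem lemma2p5:
  fixes E :: "('a, 'b) monoid_scheme" and p r :: nat
  assumes "Factorial_Ring.prime p" and "elementary_abelian E p r" and "r \<ge> 2"
    and "z \<in> carrier E"
  shows "(\<Sum>Z \<in> {Z. subgroup Z E \<and> z \<in> Z}.
            real_of_int (subgroup_mobius E {\<one>\<^bsub>E\<^esub>} Z) / real (card Z)) = 0"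
proof -
  interpret comm_group E using assms(2) by (simp add: elementary_abelian_def)
  have "p ^ 1 < p ^ r"
    using assms(3) prime_gt_1_nat[OF assms(1)] by (intro power_strict_increasing) auto
  then show ?thesis
    using mobius_weight_sum_through_eq_0[of p z] assms(1,2,4)
    by (simp add: elementary_abelian_def subgroup_mobius_weight_def)
qed

end
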